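(* Let $\kappa\in\mathbb{C}$, $0\le n\le N$, and let $\lambda_1,\dots,\lambda_N,z_1,\dots,z_n$ be generic. Consider $F(z_{n+1},\dots,z_N)=\det_N\Omega_\kappa(\{z_1,\dots,z_N\},\{\lambda_1,\dots,\lambda_N\}|\{z_1,\dots,z_N\})$ as a meromorphic function of $z_{n+1},\dots,z_N$. Then the iterated residue of $F$ at $z_{n+1}=\lambda_{n+1},\dots,z_N=\lambda_N$ equals $$\prod_{a=n+1}^N\mathcal Y_\kappa\bigl(\lambda_a\big|\{z_1,\dots,z_n,\lambda_{n+1},\dots,\lambda_N\}\bigr)\cdot\det_n\Omega_\kappa\bigl(\{z_1,\dots,z_n\},\{\lambda_1,\dots,\lambda_n\}\big|\{z_1,\dots,z_n,\lambda_{n+1},\dots,\lambda_N\}\bigr).$$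
   Context: Fix $\eta\in\mathbb{C}$ with $\sinh\eta\ne0$ and $\xi_1,\dots,\xi_M\in\mathbb{C}$. $a(\lambda)=\prod_{j=1}^M\sinh(\lambda-\xi_j+\eta)$, $d(\lambda)=\prod_{j=1}^M\sinh(\lambda-\xi_j)$, $t(\lambda,\mu)=\frac{\sinh\eta}{\sinh(\lambda-\mu)\sinh(\lambda-\mu+\eta)}$. For a set $\{\nu_1..\nu_L\}$, $\mathcal Y_\kappa(\mu|\{\nu\})=a(\mu)\prod_{k=1}^L\sinh(\nu_k-\mu+\eta)+\kappa d(\mu)\prod_{k=1}^L\sinh(\nu_k-\mu-\eta)$. For sets $\{\lambda_1..\lambda_n\}$, $\{\mu_1..\mu_n\}$, $\{\nu_1..\nu_{n'}\}$, $\Omega_\kappa(\{\lambda\},\{\mu\}|\{\nu\})$ is the $n\times n$ matrix with $(\Omega_\kappa)_{jk}=a(\mu_k)t(\lambda_j,\mu_k)\prod_{c=1}^{n'}\sinh(\nu_c-\mu_k+\eta)-\kappa\,d(\mu_k)t(\mu_k,\lambda_j)\prod_{c=1}^{n'}\sinh(\nu_c-\mu_k-\eta)$ (rows indexed by the first set, columns by the second). *)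

theory Defs
  imports "HOL-Complex_Analysis.Complex_Analysis"
begin

text \<open>Inhomogeneous six-vertex data: eta, inhomogeneities xi 0 .. xi (M-1).\<close>

definition a_fun :: "complex \<Rightarrow> (nat \<Rightarrow> complex) \<Rightarrow> nat \<Rightarrow> complex \<Rightarrow> complex" where
  "a_fun \<eta> \<xi> M x = (\<Prod>j<M. sinh (x - \<xi> j + \<eta>))"

definition d_fun :: "(nat \<Rightarrow> complex) \<Rightarrow> nat \<Rightarrow> complex \<Rightarrow> complex" where
  "d_fun \<xi> M x = (\<Prod>j<M. sinh (x - \<xi> j))"

definition t_fun :: "complex \<Rightarrow> complex \<Rightarrow> complex \<Rightarrow> complex" where
  "t_fun \<eta> x \<mu> = sinh \<eta> / (sinh (x - \<mu>) * sinh (x - \<mu> + \<eta>))"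

text \<open>The function Y_kappa(mu | nus), the set nus given as a list.\<close>
definition Ycal :: "complex \<Rightarrow> (nat \<Rightarrow> complex) \<Rightarrow> nat \<Rightarrow> complex \<Rightarrow> complex \<Rightarrow> complex list \<Rightarrow> complex" where
  "Ycal \<eta> \<xi> M \<kappa> \<mu> \<nu>s =
     a_fun \<eta> \<xi> M \<mu> * (\<Prod>k<length \<nu>s. sinh (\<nu>s ! k - \<mu> + \<eta>))
     + \<kappa> * d_fun \<xi> M \<mu> * (\<Prod>k<length \<nu>s. sinh (\<nu>s ! k - \<mu> - \<eta>))"

text \<open>Entries of Omega_kappa(lams, mus | nus): rows indexed by lams, columns by mus.\<close>
definition Omega_entry :: "complex \<Rightarrow> (nat \<Rightarrow> complex) \<Rightarrow> nat \<Rightarrow> complex \<Rightarrow> complex list \<Rightarrow> complex list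
     \<Rightarrow> complex list \<Rightarrow> nat \<Rightarrow> nat \<Rightarrow> complex" where
  "Omega_entry \<eta> \<xi> M \<kappa> lams mus nus j k =
     a_fun \<eta> \<xi> M (mus ! k) * t_fun \<eta> (lams ! j) (mus ! k) * (\<Prod>c<length nus. sinh (nus ! c - mus ! k + \<eta>))
     - \<kappa> * d_fun \<xi> M (mus ! k) * t_fun \<eta> (mus ! k) (lams ! j) * (\<Prod>c<length nus. sinh (nus ! c - mus ! k - \<eta>))"

definition detN :: "nat \<Rightarrow> (nat \<Rightarrow> nat \<Rightarrow> complex) \<Rightarrow> complex" where
  "detN n A = (\<Sum>p\<in>{p. p permutes {..<n}}. of_int (sign p) * (\<Prod>i<n. A i (p i)))"

definition Omega_det :: "complex \<Rightarrow> (nat \<Rightarrow> complex) \<Rightarrow> nat \<Rightarrow> complex \<Rightarrow> complex list \<Rightarrow> complex list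
     \<Rightarrow> complex list \<Rightarrow> complex" where
  "Omega_det \<eta> \<xi> M \<kappa> lams mus nus = detN (length lams) (Omega_entry \<eta> \<xi> M \<kappa> lams mus nus)"

text \<open>Iterated residue: iter_res F [p1,...,pm] takes the residue of F in its first variable
  at p1, then of the result in the (new) first variable at p2, etc.\<close>
fun iter_res :: "(complex list \<Rightarrow> complex) \<Rightarrow> complex list \<Rightarrow> complex" where
  "iter_res F [] = F []"
| "iter_res F (p # ps) = iter_res (\<lambda>ws. residue (\<lambda>w. F (w # ws)) p) ps"

text \<open>"P holds for generic points of C^k": P holds on an open dense subset of C^k
  (points of C^k represented as lists of length k, with the product topology).\<close>
definition generic :: "nat \<Rightarrow> (complex list \<Rightarrow> bool) \<Rightarrow> bool" where
  "generic k P \<longleftrightarrow> (\<exists>U. U \<subseteq> {xs. length xs = k} \<and> (\<forall>xs\<in>U. P xs)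
     \<and> (\<forall>xs\<in>U. \<exists>e>0. \<forall>ys. length ys = k \<and> (\<forall>i<k. dist (ys ! i) (xs ! i) < e) \<longrightarrow> ys \<in> U)
     \<and> (\<forall>xs. length xs = k \<longrightarrow> (\<forall>e>0. \<exists>ys\<in>U. \<forall>i<k. dist (ys ! i) (xs ! i) < e)))"

end

theory Submission
  imports Defs "Jordan_Normal_Form.Determinant"
begin

(* Take the residues one variable at a time. The variable w = z_a occurs in row a of the
   determinant and in the set nu. For generic lambda's, the only entry with a pole at
   w = lambda_a is the diagonal one, through t(w, lambda_a) and t(lambda_a, w). Multiplying
   row a by sinh (w - lambda_a) makes the matrix holomorphic near lambda_a, and at
   w = lambda_a that row becomes Y_kappa(lambda_a | nu) times a unit vector. Laplace expansion
   along it shows that the residue is Y_kappa times the minor without row and column a, which is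
   again an Omega-determinant, now with lambda_a in place of z_a inside nu; iterate.
   "Generic" only requires the lambda's to be distinct with differences avoiding the zeros of
   sinh, sinh (_ + eta) and sinh (_ - eta): an open condition whose exceptional sets are
   countable, hence open and dense. *)

lemma detN_eq_det: "detN m A = Determinant.det (mat m m (\<lambda>(i, j). A i j))"
  unfolding detN_def Determinant.det_def
  by (auto simp: atLeast0LessThan intro!: sum.cong prod.cong dest: permutes_in_image)

lemma detN_cong:
  assumes "\<And>i j. i < m \<Longrightarrow> j < m \<Longrightarrow> A i j = B i j"
  shows "detN m A = detN m B"
  unfolding detN_eq_det using assms by (intro arg_cong[where f = Determinant.det] eq_matI) auto

lemma detN_mult_row:
  assumes "r < m" "\<And>k. k < m \<Longrightarrow> B r k = c * A r k"
    and "\<And>i k. i < m \<Longrightarrow> k < m \<Longrightarrow> i \<noteq> r \<Longrightarrow> B i k = A i k"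
  shows "detN m B = c * detN m A"
proof -
  have "mat m m (\<lambda>(i, j). B i j) = multrow r c (mat m m (\<lambda>(i, j). A i j))"
    using assms by (intro eq_matI) auto
  then show ?thesis
    unfolding detN_eq_det using assms(1) by (simp add: det_multrow)
qed

lemma detN_expand_row_unit:
  assumes "r < m" "\<And>k. k < m \<Longrightarrow> k \<noteq> r \<Longrightarrow> A r k = 0"
  shows "detN m A = A r r * detN (m - 1) (\<lambda>i k. A (insert_index r i) (insert_index r k))"
proof -
  define A' where "A' = mat m m (\<lambda>(i, j). A i j)"
  have A': "A' \<in> carrier_mat m m" unfolding A'_def by simp
  have "detN m A = (\<Sum>k<m. A' $$ (r, k) * cofactor A' r k)"
    unfolding detN_eq_det A'_def[symmetric] by (rule laplace_expansion_row[OF A' assms(1)])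
  also have "\<dots> = A r r * cofactor A' r r"
    using assms by (subst sum.remove[of _ r]) (auto simp: A'_def intro!: sum.neutral)
  also have "cofactor A' r r = Determinant.det (mat_delete A' r r)"
    unfolding cofactor_def by (simp flip: mult_2)
  also have "mat_delete A' r r = mat (m - 1) (m - 1) (\<lambda>(i, k). A (insert_index r i) (insert_index r k))"
    unfolding mat_delete_def A'_def by (rule eq_matI) (auto simp: insert_index_def)
  finally show ?thesis by (simp add: detN_eq_det)
qed

lemma analytic_on_detN [analytic_intros]:
  assumes "\<And>i k. i < m \<Longrightarrow> k < m \<Longrightarrow> (\<lambda>w. A w i k) analytic_on S"
  shows "(\<lambda>w. detN m (A w)) analytic_on S"
  unfolding detN_def by (intro analytic_intros assms) (auto dest: permutes_in_image)

lemma analytic_on_prod_list [analytic_intros]: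
  assumes "\<And>x. x \<in> set xs \<Longrightarrow> f x analytic_on S"
  shows "(\<lambda>w. \<Prod>x\<leftarrow>xs. f x w) analytic_on S"
  using assms by (induction xs) (auto intro!: analytic_intros)

lemma analytic_on_nth_middle [analytic_intros]: "(\<lambda>w. (xs @ w # ys) ! c) analytic_on S"
proof (cases "c = length xs")
  case False
  then have "(\<lambda>w. (xs @ w # ys) ! c) = (\<lambda>_. (xs @ undefined # ys) ! c)"
    by (auto simp: nth_append nth_Cons split: nat.split)
  then show ?thesis by (simp add: analytic_on_const)
qed (simp add: analytic_on_ident)

lemma analytic_on_t_fun:
  assumes "f analytic_on S" "g analytic_on S"
    and "\<And>z. z \<in> S \<Longrightarrow> sinh (f z - g z) \<noteq> 0 \<and> sinh (f z - g z + \<eta>) \<noteq> 0"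
  shows "(\<lambda>z. t_fun \<eta> (f z) (g z)) analytic_on S"
  unfolding t_fun_def using assms by (intro analytic_intros) auto

lemma sinh_eq_0_iff: "sinh (z :: complex) = 0 \<longleftrightarrow> (\<exists>n::int. z = \<i> * of_real (of_int n * pi))"
proof -
  have "\<i> * z = w \<longleftrightarrow> z = \<i> * (- w)" for w
    by (auto simp: algebra_simps)
  then have "sinh z = 0 \<longleftrightarrow> (\<exists>n::int. z = \<i> * of_real (of_int (- n) * pi))"
    by (simp add: sinh_conv_sin sin_eq_0)
  also have "\<dots> \<longleftrightarrow> (\<exists>n::int. z = \<i> * of_real (of_int n * pi))"
    by (metis minus_minus)
  finally show ?thesis .
qed

lemma sinh_nonzero_near_0:
  assumes "0 < norm z" "norm z < pi"
  shows "sinh (z :: complex) \<noteq> 0"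
proof
  assume "sinh z = 0"
  then obtain n :: int where z: "z = \<i> * of_real (of_int n * pi)"
    by (auto simp: sinh_eq_0_iff)
  then have "norm z = \<bar>of_int n\<bar> * pi"
    by (simp add: norm_mult abs_mult)
  with assms show False
    by (cases "n = 0") (auto simp: z)
qed

lemma eventually_at_sinh_nonzero: "\<forall>\<^sub>F w in at p. sinh (w - p :: complex) \<noteq> 0"
proof -
  have "sinh (w - p) \<noteq> 0" if "w \<noteq> p" "dist w p < pi" for w
    using that sinh_nonzero_near_0[of "w - p"] by (simp add: dist_norm)
  then show ?thesis
    unfolding eventually_at by (intro exI[of _ pi]) auto
qed

lemma countable_sinh_zeros: "countable {z :: complex. sinh z = 0}"
proof -
  have "{z :: complex. sinh z = 0} \<subseteq> range (\<lambda>n :: int. \<i> * of_real (of_int n * pi))"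
    by (auto simp: sinh_eq_0_iff)
  then show ?thesis
    by (rule countable_subset) simp
qed

lemma tendsto_divide_sinh: "((\<lambda>w. (w - p) / sinh (w - p :: complex)) \<longlongrightarrow> 1) (at p)"
proof -
  have "(sinh has_field_derivative 1) (at (0::complex))"
    using has_field_derivative_sinh[OF DERIV_ident, of 0] by simp
  then have "((\<lambda>h. sinh h / h) \<longlongrightarrow> (1::complex)) (at 0)"
    unfolding DERIV_def by simp
  then have "((\<lambda>h. h / sinh h) \<longlongrightarrow> (1::complex)) (at 0)"
    using tendsto_inverse[of "\<lambda>h. sinh h / h" 1 "at (0::complex)"] by simp
  then have "((\<lambda>h. (p + h - p) / sinh (p + h - p)) \<longlongrightarrow> (1::complex)) (at 0)"
    by simp
  then show ?thesis
    by (rule LIM_offset_zero_cancel)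
qed

lemma residue_divide_sinh:
  assumes "f analytic_on {p}"
  shows "residue (\<lambda>w. f w / sinh (w - p)) p = f p"
proof -
  obtain e where e: "e > 0" "f holomorphic_on ball p e"
    using assms analytic_at_ball by blast
  define r where "r = min e pi"
  show ?thesis
  proof (rule residue_simple')
    show "open (ball p r)" "p \<in> ball p r" using e by (auto simp: r_def)
    have "f analytic_on ball p e"
      using e(2) by (simp add: analytic_on_open)
    then have "f analytic_on ball p r - {p}"
      by (rule analytic_on_subset) (auto simp: r_def)
    moreover have "sinh (w - p) \<noteq> 0" if "w \<in> ball p r - {p}" for w
      using that sinh_nonzero_near_0[of "w - p"] by (auto simp: r_def dist_norm norm_minus_commute)
    ultimately have "(\<lambda>w. f w / sinh (w - p)) analytic_on ball p r - {p}"
      by (intro analytic_intros) auto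
    then show "(\<lambda>w. f w / sinh (w - p)) holomorphic_on ball p r - {p}"
      by (rule analytic_imp_holomorphic)
    have "isCont f p"
      using assms by (rule analytic_at_imp_isCont)
    then have "((\<lambda>w. f w * ((w - p) / sinh (w - p))) \<longlongrightarrow> f p * 1) (at p)"
      by (intro tendsto_mult tendsto_divide_sinh) (simp add: isCont_def)
    then show "((\<lambda>w. f w / sinh (w - p) * (w - p)) \<longlongrightarrow> f p) (at p)"
      by simp
  qed
qed

lemma residue_detN_simple_pole_row:
  fixes A :: "complex \<Rightarrow> nat \<Rightarrow> nat \<Rightarrow> complex"
  assumes "r < m" and h: "h analytic_on {p}"
    and A_analytic: "\<And>i k. i < m \<Longrightarrow> k < m \<Longrightarrow> (i, k) \<noteq> (r, r) \<Longrightarrow> (\<lambda>w. A w i k) analytic_on {p}"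
    and D: "D analytic_on {p}" "\<forall>\<^sub>F w in at p. sinh (w - p) * A w r r = D w"
  shows "residue (\<lambda>w. h w * detN m (A w)) p
       = h p * D p * detN (m - 1) (\<lambda>i k. A p (insert_index r i) (insert_index r k))"
proof -
  define B where "B w i k = (if i = r then if k = r then D w else sinh (w - p) * A w i k else A w i k)" for w i k
  have B_analytic: "(\<lambda>w. B w i k) analytic_on {p}" if "i < m" "k < m" for i k
    using that A_analytic D(1) unfolding B_def by (cases "i = r"; cases "k = r") (auto intro!: analytic_intros)
  from D(2) eventually_at_sinh_nonzero
  have "\<forall>\<^sub>F w in at p. h w * detN m (A w) = h w * detN m (B w) / sinh (w - p)"
  proof eventually_elim
    case (elim w)
    then have "detN m (B w) = sinh (w - p) * detN m (A w)"
      using \<open>r < m\<close> by (intro detN_mult_row) (auto simp: B_def)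
    then show ?case using elim by simp
  qed
  then have "residue (\<lambda>w. h w * detN m (A w)) p = residue (\<lambda>w. h w * detN m (B w) / sinh (w - p)) p"
    by (rule residue_cong) simp
  also have "\<dots> = h p * detN m (B p)"
    by (rule residue_divide_sinh) (intro analytic_intros h B_analytic)
  also have "detN m (B p) = B p r r * detN (m - 1) (\<lambda>i k. B p (insert_index r i) (insert_index r k))"
    using \<open>r < m\<close> by (rule detN_expand_row_unit) (simp add: B_def)
  also have "insert_index r i \<noteq> r" for i
    by (simp add: insert_index_def)
  then have "(\<lambda>i k. B p (insert_index r i) (insert_index r k)) = (\<lambda>i k. A p (insert_index r i) (insert_index r k))"
    by (simp add: B_def)
  finally show ?thesis
    by (simp add: B_def mult.assoc)
qed

definition sinh_separated :: "complex \<Rightarrow> complex \<Rightarrow> complex \<Rightarrow> bool" where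
  "sinh_separated \<eta> x y \<longleftrightarrow> sinh (x - y) \<noteq> 0 \<and> sinh (x - y + \<eta>) \<noteq> 0 \<and> sinh (x - y - \<eta>) \<noteq> 0"

lemma sinh_separated_sym: "sinh_separated \<eta> x y \<longleftrightarrow> sinh_separated \<eta> y x"
proof -
  have "y - x = - (x - y)" "y - x + \<eta> = - (x - y - \<eta>)" "y - x - \<eta> = - (x - y + \<eta>)"
    by simp_all
  then show ?thesis
    unfolding sinh_separated_def by (simp only: sinh_minus neg_equal_0_iff_equal) blast
qed

lemma Omega_entry_row_cong:
  "lams ! j = lams' ! j \<Longrightarrow> Omega_entry \<eta> \<xi> M \<kappa> lams mus nus j k = Omega_entry \<eta> \<xi> M \<kappa> lams' mus nus j k"
  unfolding Omega_entry_def by simp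

lemma nth_insert_index_middle:
  "i < length xs + length ys \<Longrightarrow> (xs @ p # ys) ! insert_index (length xs) i = (xs @ ys) ! i"
  by (auto simp: insert_index_def nth_append)

lemma Omega_entry_insert_index:
  assumes "length C = length zs" "length P = length ws" "i < length (zs @ ws)" "k < length (zs @ ws)"
  shows "Omega_entry \<eta> \<xi> M \<kappa> (zs @ z # ws) (C @ c # P) nus (insert_index (length zs) i) (insert_index (length zs) k)
       = Omega_entry \<eta> \<xi> M \<kappa> (zs @ ws) (C @ P) nus i k"
proof -
  have "(C @ c # P) ! insert_index (length zs) k = (C @ P) ! k"
    using assms nth_insert_index_middle[of k C P c] by simp
  moreover have "(zs @ z # ws) ! insert_index (length zs) i = (zs @ ws) ! i"
    using assms nth_insert_index_middle[of i zs ws z] by simp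
  ultimately show ?thesis
    unfolding Omega_entry_def by simp
qed

lemma analytic_on_Omega_entry_nus [analytic_intros]:
  "(\<lambda>w. Omega_entry \<eta> \<xi> M \<kappa> lams mus (V @ w # ws) j k) analytic_on S"
  unfolding Omega_entry_def by (simp only: length_append length_Cons) (intro analytic_intros)

lemma analytic_at_Omega_entry_row:
  assumes "sinh_separated \<eta> p (mus ! k)"
  shows "(\<lambda>w. Omega_entry \<eta> \<xi> M \<kappa> (zs @ w # ws) mus (V @ w # ws) (length zs) k) analytic_on {p}"
  using assms sinh_separated_sym[of \<eta> p "mus ! k"] unfolding Omega_entry_def sinh_separated_def
  by (simp only: nth_append_length length_append length_Cons)
     (intro analytic_intros analytic_on_t_fun; simp)

lemma sinh_mult_Omega_entry_pole:
  assumes "lams ! j = w" "mus ! k = p" "sinh (w - p) \<noteq> 0"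
  shows "sinh (w - p) * Omega_entry \<eta> \<xi> M \<kappa> lams mus nus j k
       = a_fun \<eta> \<xi> M p * (sinh \<eta> / sinh (w - p + \<eta>)) * (\<Prod>c<length nus. sinh (nus ! c - p + \<eta>))
         + \<kappa> * d_fun \<xi> M p * (sinh \<eta> / sinh (p - w + \<eta>)) * (\<Prod>c<length nus. sinh (nus ! c - p - \<eta>))"
proof -
  have "sinh (p - w) = - sinh (w - p)"
    using sinh_minus[of "w - p"] by simp
  then have "sinh (w - p) * t_fun \<eta> w p = sinh \<eta> / sinh (w - p + \<eta>)"
    and "sinh (w - p) * t_fun \<eta> p w = - (sinh \<eta> / sinh (p - w + \<eta>))"
    using assms(3) by (simp_all add: t_fun_def)
  moreover have "sinh (w - p) * Omega_entry \<eta> \<xi> M \<kappa> lams mus nus j k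
      = a_fun \<eta> \<xi> M p * (sinh (w - p) * t_fun \<eta> w p) * (\<Prod>c<length nus. sinh (nus ! c - p + \<eta>))
        - \<kappa> * d_fun \<xi> M p * (sinh (w - p) * t_fun \<eta> p w) * (\<Prod>c<length nus. sinh (nus ! c - p - \<eta>))"
    unfolding Omega_entry_def assms(1,2) by (simp add: algebra_simps)
  ultimately show ?thesis
    by simp
qed

lemma residue_Omega_det:
  fixes C P zs ws V :: "complex list"
  assumes "sinh \<eta> \<noteq> 0" and len: "length C = length zs" "length P = length ws"
    and sep: "\<And>c. c \<in> set (C @ P) \<Longrightarrow> sinh_separated \<eta> p c"
    and h: "h analytic_on {p}"
  shows "residue (\<lambda>w. h w * Omega_det \<eta> \<xi> M \<kappa> (zs @ w # ws) (C @ p # P) (V @ w # ws)) p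
       = h p * Ycal \<eta> \<xi> M \<kappa> p (V @ p # ws) * Omega_det \<eta> \<xi> M \<kappa> (zs @ ws) (C @ P) (V @ p # ws)"
proof -
  define r where "r = length zs"
  define A where "A w = Omega_entry \<eta> \<xi> M \<kappa> (zs @ w # ws) (C @ p # P) (V @ w # ws)" for w
  \<comment> \<open>sinh (w - p) times the diagonal entry A w r r, continued analytically to w = p\<close>
  define D where "D w =
    a_fun \<eta> \<xi> M p * (sinh \<eta> / sinh (w - p + \<eta>)) * (\<Prod>c<length (V @ p # ws). sinh ((V @ w # ws) ! c - p + \<eta>))
    + \<kappa> * d_fun \<xi> M p * (sinh \<eta> / sinh (p - w + \<eta>)) * (\<Prod>c<length (V @ p # ws). sinh ((V @ w # ws) ! c - p - \<eta>))"
    for w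
  have "residue (\<lambda>w. h w * detN (Suc (length (zs @ ws))) (A w)) p
      = h p * D p * detN (Suc (length (zs @ ws)) - 1) (\<lambda>i k. A p (insert_index r i) (insert_index r k))"
  proof (rule residue_detN_simple_pole_row[OF _ h])
    show "r < Suc (length (zs @ ws))"
      by (simp add: r_def)
    show "D analytic_on {p}"
      using \<open>sinh \<eta> \<noteq> 0\<close> unfolding D_def by (intro analytic_intros) auto
    show "\<forall>\<^sub>F w in at p. sinh (w - p) * A w r r = D w"
      using eventually_at_sinh_nonzero
      by eventually_elim (use len in \<open>simp add: A_def D_def r_def sinh_mult_Omega_entry_pole nth_append\<close>)
    fix i k assume "k < Suc (length (zs @ ws))" "(i, k) \<noteq> (r, r)"
    show "(\<lambda>w. A w i k) analytic_on {p}"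
    proof (cases "i = r")
      case True
      then have "(C @ p # P) ! k \<in> set (C @ P)"
        using \<open>k < _\<close> \<open>(i, k) \<noteq> (r, r)\<close> len by (auto simp: r_def nth_append nth_Cons split: nat.split)
      then have "sinh_separated \<eta> p ((C @ p # P) ! k)"
        by (rule sep)
      then show ?thesis
        unfolding A_def \<open>i = r\<close> r_def by (rule analytic_at_Omega_entry_row)
    next
      case False
      then have "A w i k = Omega_entry \<eta> \<xi> M \<kappa> (zs @ p # ws) (C @ p # P) (V @ w # ws) i k" for w
        unfolding A_def by (intro Omega_entry_row_cong) (auto simp: r_def nth_append nth_Cons split: nat.split)
      then show ?thesis
        by (simp add: analytic_on_Omega_entry_nus)
    qed
  qed
  also have "D p = Ycal \<eta> \<xi> M \<kappa> p (V @ p # ws)"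
    using \<open>sinh \<eta> \<noteq> 0\<close> by (simp add: D_def Ycal_def)
  also have "detN (Suc (length (zs @ ws)) - 1) (\<lambda>i k. A p (insert_index r i) (insert_index r k))
      = Omega_det \<eta> \<xi> M \<kappa> (zs @ ws) (C @ P) (V @ p # ws)"
    unfolding Omega_det_def A_def r_def diff_Suc_1 using Omega_entry_insert_index[OF len] by (intro detN_cong)
  finally show ?thesis
    by (simp add: Omega_det_def A_def mult.assoc)
qed

lemma iter_res_cong:
  assumes "\<And>ws. length ws = length ps \<Longrightarrow> F ws = G ws"
  shows "iter_res F ps = iter_res G ps"
  using assms
proof (induction ps arbitrary: F G)
  case (Cons p ps)
  show ?case
    unfolding iter_res.simps by (rule Cons.IH) (simp add: Cons.prems)
qed simp

lemma analytic_on_Ycal_middle [analytic_intros]: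
  "(\<lambda>w. Ycal \<eta> \<xi> M \<kappa> q (V @ w # ws)) analytic_on S"
  unfolding Ycal_def by (simp only: length_append length_Cons) (intro analytic_intros)

(* Generalised over the prefactor Q and the prefix V of nu for the induction. *)
lemma iter_res_Omega_det:
  fixes C P zs V Q :: "complex list"
  assumes "sinh \<eta> \<noteq> 0" "length C = length zs"
    and "distinct (C @ P)" "pairwise (sinh_separated \<eta>) (set (C @ P))"
  shows "iter_res (\<lambda>ws. (\<Prod>q\<leftarrow>Q. Ycal \<eta> \<xi> M \<kappa> q (V @ ws)) * Omega_det \<eta> \<xi> M \<kappa> (zs @ ws) (C @ P) (V @ ws)) P
       = (\<Prod>q\<leftarrow>Q @ P. Ycal \<eta> \<xi> M \<kappa> q (V @ P)) * Omega_det \<eta> \<xi> M \<kappa> zs C (V @ P)"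
  using assms(3,4)
proof (induction P arbitrary: V Q)
  case Nil
  then show ?case by simp
next
  case (Cons p P)
  have sep: "sinh_separated \<eta> p c" if "c \<in> set (C @ P)" for c
    using Cons.prems that by (auto simp: pairwise_def)
  have distinct_C_P: "distinct (C @ P)"
    using Cons.prems(1) by simp
  have pairwise_C_P: "pairwise (sinh_separated \<eta>) (set (C @ P))"
    using Cons.prems(2) by (rule pairwise_subset) auto
  have step: "residue (\<lambda>w. (\<Prod>q\<leftarrow>Q. Ycal \<eta> \<xi> M \<kappa> q (V @ w # ws))
          * Omega_det \<eta> \<xi> M \<kappa> (zs @ w # ws) (C @ p # P) (V @ w # ws)) p
      = (\<Prod>q\<leftarrow>Q @ [p]. Ycal \<eta> \<xi> M \<kappa> q ((V @ [p]) @ ws))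
          * Omega_det \<eta> \<xi> M \<kappa> (zs @ ws) (C @ P) ((V @ [p]) @ ws)"
    if "length ws = length P" for ws
  proof -
    have "(\<lambda>w. \<Prod>q\<leftarrow>Q. Ycal \<eta> \<xi> M \<kappa> q (V @ w # ws)) analytic_on {p}"
      by (intro analytic_intros)
    from residue_Omega_det[OF assms(1,2) that[symmetric] sep this]
    show ?thesis by (simp add: mult.assoc)
  qed
  have "iter_res (\<lambda>ws. (\<Prod>q\<leftarrow>Q. Ycal \<eta> \<xi> M \<kappa> q (V @ ws))
        * Omega_det \<eta> \<xi> M \<kappa> (zs @ ws) (C @ p # P) (V @ ws)) (p # P)
      = iter_res (\<lambda>ws. (\<Prod>q\<leftarrow>Q @ [p]. Ycal \<eta> \<xi> M \<kappa> q ((V @ [p]) @ ws))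
        * Omega_det \<eta> \<xi> M \<kappa> (zs @ ws) (C @ P) ((V @ [p]) @ ws)) P"
    unfolding iter_res.simps by (rule iter_res_cong) (simp add: step)
  also have "\<dots> = (\<Prod>q\<leftarrow>(Q @ [p]) @ P. Ycal \<eta> \<xi> M \<kappa> q ((V @ [p]) @ P))
      * Omega_det \<eta> \<xi> M \<kappa> zs C ((V @ [p]) @ P)"
    by (rule Cons.IH[OF distinct_C_P pairwise_C_P])
  finally show ?case by simp
qed

lemma prod_list_map_drop:
  "n \<le> length xs \<Longrightarrow> (\<Prod>x\<leftarrow>drop n xs. f x) = (\<Prod>i\<in>{n..<length xs}. f (xs ! i))"
proof -
  assume "n \<le> length xs"
  then have "drop n xs = map ((!) xs) [n..<length xs]"
    by (intro nth_equalityI) auto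
  then show ?thesis
    by (simp add: prod.distinct_set_conv_list[symmetric] comp_def)
qed

lemma iter_res_Omega_det_drop:
  assumes "sinh \<eta> \<noteq> 0" "length zs = n" "n \<le> length lams"
    and "distinct lams" "pairwise (sinh_separated \<eta>) (set lams)"
  shows "iter_res (\<lambda>ws. Omega_det \<eta> \<xi> M \<kappa> (zs @ ws) lams (zs @ ws)) (drop n lams)
       = (\<Prod>a\<in>{n..<length lams}. Ycal \<eta> \<xi> M \<kappa> (lams ! a) (zs @ drop n lams))
         * Omega_det \<eta> \<xi> M \<kappa> zs (take n lams) (zs @ drop n lams)"
proof -
  have "length (take n lams) = length zs"
    using assms(2,3) by simp
  from iter_res_Omega_det[OF assms(1) this, where P = "drop n lams" and Q = "[]" and V = zs] assms(4,5)
  have "iter_res (\<lambda>ws. Omega_det \<eta> \<xi> M \<kappa> (zs @ ws) lams (zs @ ws)) (drop n lams)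
      = (\<Prod>q\<leftarrow>drop n lams. Ycal \<eta> \<xi> M \<kappa> q (zs @ drop n lams))
        * Omega_det \<eta> \<xi> M \<kappa> zs (take n lams) (zs @ drop n lams)"
    by simp
  also have "(\<Prod>q\<leftarrow>drop n lams. Ycal \<eta> \<xi> M \<kappa> q (zs @ drop n lams))
      = (\<Prod>a\<in>{n..<length lams}. Ycal \<eta> \<xi> M \<kappa> (lams ! a) (zs @ drop n lams))"
    by (rule prod_list_map_drop[OF assms(3)])
  finally show ?thesis .
qed

lemma generic_mono:
  assumes "generic k P" "\<And>xs. length xs = k \<Longrightarrow> P xs \<Longrightarrow> Q xs"
  shows "generic k Q"
  using assms unfolding generic_def subset_iff mem_Collect_eq by (elim exE conjE) (intro exI conjI, blast+)

lemma eventually_nearby_pair: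
  fixes R :: "'a::metric_space \<Rightarrow> 'b::metric_space \<Rightarrow> bool"
  assumes "open {(x, y). R x y}" "R x y"
  shows "\<forall>\<^sub>F e in at_right 0. \<forall>u v. dist u x < e \<longrightarrow> dist v y < e \<longrightarrow> R u v"
proof -
  have "(x, y) \<in> {(x, y). R x y}"
    using assms(2) by simp
  then obtain A B where AB: "open A" "open B" "(x, y) \<in> A \<times> B" "A \<times> B \<subseteq> {(x, y). R x y}"
    by (rule open_prod_elim[OF assms(1)])
  obtain a where a: "a > 0" "ball x a \<subseteq> A"
    using AB by (auto elim: openE)
  obtain b where b: "b > 0" "ball y b \<subseteq> B"
    using AB by (auto elim: openE)
  have "R u v" if "dist u x < min a b" "dist v y < min a b" for u v
  proof -
    have "(u, v) \<in> A \<times> B"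
      using that a b by (auto simp: dist_commute subset_iff)
    then show ?thesis using AB(4) by blast
  qed
  then show ?thesis
    unfolding eventually_at_right_field using \<open>a > 0\<close> \<open>b > 0\<close>
    by (intro exI[of _ "min a b"]) auto
qed

lemma distinct_pairwise_conv_nth:
  "distinct ys \<and> pairwise R (set ys)
     \<longleftrightarrow> (\<forall>i<length ys. \<forall>j<length ys. i \<noteq> j \<longrightarrow> ys ! i \<noteq> ys ! j \<and> R (ys ! i) (ys ! j))"
  (is "?lhs \<longleftrightarrow> ?rhs")
proof
  assume lhs: ?lhs
  show ?rhs
  proof (intro allI impI)
    fix i j assume ij: "i < length ys" "j < length ys" "i \<noteq> j"
    then have "ys ! i \<noteq> ys ! j"
      using lhs by (simp add: nth_eq_iff_index_eq)
    moreover have "R (ys ! i) (ys ! j)"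
      using lhs ij calculation by (metis nth_mem pairwiseD)
    ultimately show "ys ! i \<noteq> ys ! j \<and> R (ys ! i) (ys ! j)" ..
  qed
next
  assume rhs: ?rhs
  then have "distinct ys"
    unfolding distinct_conv_nth by blast
  moreover have "R x y" if "x \<in> set ys" "y \<in> set ys" "x \<noteq> y" for x y
  proof -
    obtain i where i: "i < length ys" "x = ys ! i"
      using \<open>x \<in> set ys\<close> by (auto simp: in_set_conv_nth)
    obtain j where j: "j < length ys" "y = ys ! j"
      using \<open>y \<in> set ys\<close> by (auto simp: in_set_conv_nth)
    have "i \<noteq> j"
      using i j \<open>x \<noteq> y\<close> by blast
    then show ?thesis
      using rhs i j by blast
  qed
  ultimately show ?lhs
    by (simp add: pairwise_def)
qed

lemma eventually_nearby_distinct_pairwise: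
  fixes R :: "'a::metric_space \<Rightarrow> 'a \<Rightarrow> bool"
  assumes "open {(x, y). R x y}" "distinct xs" "pairwise R (set xs)"
  shows "\<forall>\<^sub>F e in at_right 0. \<forall>ys. length ys = length xs \<and> (\<forall>i<length xs. dist (ys ! i) (xs ! i) < e)
           \<longrightarrow> distinct ys \<and> pairwise R (set ys)"
proof -
  define I where "I = {(i, j). i < length xs \<and> j < length xs \<and> i \<noteq> j}"
  have "{(x, y). x \<noteq> y \<and> R x y} = {(x, y) |x y. x \<noteq> y} \<inter> {(x, y). R x y}"
    by auto
  then have "open {(x, y). x \<noteq> y \<and> R x y}"
    using open_Int[OF open_diagonal_complement assms(1)] by (simp only:)
  then have "\<forall>\<^sub>F e in at_right 0. \<forall>u v. dist u (xs ! i) < e \<longrightarrow> dist v (xs ! j) < e \<longrightarrow> u \<noteq> v \<and> R u v"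
    if "(i, j) \<in> I" for i j
    using that distinct_pairwise_conv_nth[THEN iffD1, OF conjI[OF assms(2,3)]] unfolding I_def
    by (intro eventually_nearby_pair[where R = "\<lambda>u v. u \<noteq> v \<and> R u v"]) auto
  moreover have "finite I"
    unfolding I_def by (rule finite_subset[of _ "{..<length xs} \<times> {..<length xs}"]) auto
  ultimately have "\<forall>\<^sub>F e in at_right 0. \<forall>(i, j)\<in>I. \<forall>u v. dist u (xs ! i) < e \<longrightarrow> dist v (xs ! j) < e \<longrightarrow> u \<noteq> v \<and> R u v"
    by (auto intro: eventually_ball_finite)
  then show ?thesis
  proof eventually_elim
    case (elim e)
    show ?case
    proof (intro allI impI)
      fix ys assume ys: "length ys = length xs \<and> (\<forall>i<length xs. dist (ys ! i) (xs ! i) < e)"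
      then have "ys ! i \<noteq> ys ! j \<and> R (ys ! i) (ys ! j)" if "i < length ys" "j < length ys" "i \<noteq> j" for i j
        using elim that unfolding I_def by auto
      then show "distinct ys \<and> pairwise R (set ys)"
        unfolding distinct_pairwise_conv_nth by blast
    qed
  qed
qed

lemma nearby_distinct_pairwise_exists:
  fixes R :: "complex \<Rightarrow> complex \<Rightarrow> bool"
  assumes "e > 0" "symp R" "\<And>a. countable {y. \<not> R y a}"
  shows "\<exists>ys. length ys = length xs \<and> (\<forall>i<length xs. dist (ys ! i) (xs ! i) < e)
           \<and> distinct ys \<and> pairwise R (set ys)"
proof (induction xs)
  case (Cons x xs)
  then obtain ys where ys: "length ys = length xs" "\<forall>i<length xs. dist (ys ! i) (xs ! i) < e"
      "distinct ys" "pairwise R (set ys)"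
    by blast
  have "countable (set ys \<union> (\<Union>a\<in>set ys. {y. \<not> R y a}))"
    using assms(3) by (simp add: countable_finite)
  then have "ball x e - (set ys \<union> (\<Union>a\<in>set ys. {y. \<not> R y a})) \<noteq> {}"
    by (rule ball_minus_countable_nonempty[OF _ \<open>e > 0\<close>])
  then obtain y where y: "y \<in> ball x e" "y \<notin> set ys \<union> (\<Union>a\<in>set ys. {y. \<not> R y a})"
    by blast
  have "pairwise R (set (y # ys))"
    using ys(4) y(2) \<open>symp R\<close> by (auto simp: pairwise_insert dest: sympD)
  moreover have "\<forall>i<length (x # xs). dist ((y # ys) ! i) ((x # xs) ! i) < e"
    using ys(2) y(1) by (auto simp: nth_Cons' dist_commute)
  ultimately show ?case
    using ys(1,3) y(2) by (intro exI[of _ "y # ys"]) auto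
qed simp

lemma generic_distinct_pairwise:
  fixes R :: "complex \<Rightarrow> complex \<Rightarrow> bool"
  assumes "open {(x, y). R x y}" "symp R" "\<And>a. countable {y. \<not> R y a}"
  shows "generic k (\<lambda>xs. distinct xs \<and> pairwise R (set xs))"
  unfolding generic_def
proof (intro exI[of _ "{xs. length xs = k \<and> distinct xs \<and> pairwise R (set xs)}"] conjI ballI allI impI)
  fix xs assume "xs \<in> {xs. length xs = k \<and> distinct xs \<and> pairwise R (set xs)}"
  then have "length xs = k" and "\<forall>\<^sub>F e in at_right 0. \<forall>ys. length ys = length xs
      \<and> (\<forall>i<length xs. dist (ys ! i) (xs ! i) < e) \<longrightarrow> distinct ys \<and> pairwise R (set ys)"
    using eventually_nearby_distinct_pairwise[OF assms(1)] by auto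
  moreover obtain e where "e > 0" "\<forall>ys. length ys = length xs
      \<and> (\<forall>i<length xs. dist (ys ! i) (xs ! i) < e) \<longrightarrow> distinct ys \<and> pairwise R (set ys)"
    using eventually_happens'[OF trivial_limit_at_right_real eventually_conj[OF eventually_at_right_less calculation(2)]]
    by blast
  ultimately show "\<exists>e>0. \<forall>ys. length ys = k \<and> (\<forall>i<k. dist (ys ! i) (xs ! i) < e)
      \<longrightarrow> ys \<in> {xs. length xs = k \<and> distinct xs \<and> pairwise R (set xs)}"
    by auto
next
  fix xs :: "complex list" and e :: real
  assume "length xs = k" "e > 0"
  then show "\<exists>ys\<in>{xs. length xs = k \<and> distinct xs \<and> pairwise R (set xs)}. \<forall>i<k. dist (ys ! i) (xs ! i) < e"
    using nearby_distinct_pairwise_exists[OF \<open>e > 0\<close> assms(2,3), of xs] by auto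
qed auto

lemma open_sinh_separated: "open {(x, y). sinh_separated \<eta> x y}"
proof -
  have "{(x, y). sinh_separated \<eta> x y}
      = {z. sinh (fst z - snd z) \<noteq> 0} \<inter> {z. sinh (fst z - snd z + \<eta>) \<noteq> 0} \<inter> {z. sinh (fst z - snd z - \<eta>) \<noteq> 0}"
    by (auto simp: sinh_separated_def)
  then show ?thesis
    by (auto intro!: open_Int open_Collect_neq continuous_intros)
qed

lemma countable_not_sinh_separated: "countable {y. \<not> sinh_separated \<eta> y a}"
proof -
  define Z where "Z = {z :: complex. sinh z = 0}"
  have "{y. \<not> sinh_separated \<eta> y a} \<subseteq> (\<Union>c\<in>{0, \<eta>, - \<eta>}. (\<lambda>z. z + a - c) ` Z)"
  proof
    fix y assume "y \<in> {y. \<not> sinh_separated \<eta> y a}"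
    then have "\<exists>c\<in>{0, \<eta>, - \<eta>}. sinh (y - a + c) = 0"
      unfolding sinh_separated_def by auto
    then obtain c where "c \<in> {0, \<eta>, - \<eta>}" "sinh (y - a + c) = 0" ..
    then show "y \<in> (\<Union>c\<in>{0, \<eta>, - \<eta>}. (\<lambda>z. z + a - c) ` Z)"
      unfolding Z_def by (intro UN_I[of c] image_eqI[of _ _ "y - a + c"]) auto
  qed
  moreover have "countable (\<Union>c\<in>{0, \<eta>, - \<eta>}. (\<lambda>z. z + a - c) ` Z)"
    unfolding Z_def by (intro countable_UN countable_image countable_sinh_zeros) auto
  ultimately show ?thesis
    by (rule countable_subset)
qed

theorem mainTheorem8:
  fixes \<eta> \<kappa> :: complex and \<xi> :: "nat \<Rightarrow> complex" and M n N :: nat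
  assumes "sinh \<eta> \<noteq> 0" and "n \<le> N"
  shows "generic (N + n) (\<lambda>ps.
           let lams = take N ps; zs = drop N ps in
           iter_res (\<lambda>ws. Omega_det \<eta> \<xi> M \<kappa> (zs @ ws) lams (zs @ ws)) (drop n lams)
           = (\<Prod>a\<in>{n..<N}. Ycal \<eta> \<xi> M \<kappa> (lams ! a) (zs @ drop n lams))
             * Omega_det \<eta> \<xi> M \<kappa> zs (take n lams) (zs @ drop n lams))"
proof -
  have "symp (sinh_separated \<eta>)"
    by (auto intro: sympI simp: sinh_separated_sym)
  with open_sinh_separated have "generic (N + n) (\<lambda>ps. distinct ps \<and> pairwise (sinh_separated \<eta>) (set ps))"
    using countable_not_sinh_separated by (rule generic_distinct_pairwise)
  then show ?thesis
  proof (rule generic_mono)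
    fix ps :: "complex list"
    assume "length ps = N + n" and ps: "distinct ps \<and> pairwise (sinh_separated \<eta>) (set ps)"
    then have "distinct (take N ps)" "pairwise (sinh_separated \<eta>) (set (take N ps))"
      using pairwise_subset[OF _ set_take_subset, of "sinh_separated \<eta>" ps N] by simp_all
    then show "let lams = take N ps; zs = drop N ps in
        iter_res (\<lambda>ws. Omega_det \<eta> \<xi> M \<kappa> (zs @ ws) lams (zs @ ws)) (drop n lams)
        = (\<Prod>a\<in>{n..<N}. Ycal \<eta> \<xi> M \<kappa> (lams ! a) (zs @ drop n lams))
          * Omega_det \<eta> \<xi> M \<kappa> zs (take n lams) (zs @ drop n lams)"
      using iter_res_Omega_det_drop[OF assms(1), of "drop N ps" n "take N ps"] \<open>length ps = N + n\<close> \<open>n \<le> N\<close>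
      unfolding Let_def by simp
  qed
qed

end
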